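(* Let $S(\mathbf{G},\mathbf{\Sigma})$ be a constrained switching system and $T\ge1$ an integer. Let $S^T$ be its $T$-product lift and $S_{T-1}$ its $(T-1)$-path-dependent lift. Then $$\gamma_*(S_{T-1})\le\gamma_*(S^T)^{1/T}.$$
   Context: An automaton $\mathbf{G}(V,E)$ is a strongly connected directed graph with finite node set $V$ and finite edge set $E$ of labelled edges $(v,w,\sigma)$, $\sigma$ indexing a matrix $A_\sigma$ of a finite set $\mathbf{\Sigma}\subset\mathbb{R}^{n\times n}$. A path of length $T$ is a sequence of $T$ consecutive edges. The constrained switching system $S(\mathbf{G},\mathbf{\Sigma})$ is $x_{t+1}=A_{\sigma(t)}x_t$ with switching sequences equal to label sequences of paths in $\mathbf{G}$. $T$-product lift $S^T$: automaton with the same nodes $V$ and one edge $(v,w,\{\sigma(1)\dots\sigma(T)\})$ per path of length $T$ in $\mathbf{G}$ from $v$ to $w$ with labels $\sigma(1),\dots,\sigma(T)$, whose associated matrix is $A_{\sigma(T)}\cdots A_{\sigma(1)}$. $M$-path-dependent lift $S_M$ ($M\ge0$): same matrix set $\mathbf{\Sigma}$; for $M=0$ the automaton is $\mathbf{G}$; for $M\ge1$ the automaton has one node $v_p$ per path $p$ of length $M$ in $\mathbf{G}$, and for each path $p=(e_1,\dots,e_{M+1})$ of length $M+1$ in $\mathbf{G}$ an edge $(v_{p^-},v_{p^+},\sigma_p)$ where $p^-=(e_1,\dots,e_M)$, $p^+=(e_2,\dots,e_{M+1})$ and $\sigma_p$ is the label of $e_{M+1}$. For a constrained switching system $S'$ on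 automaton $(V',E')$, $\gamma_*(S')$ is the infimum of $\gamma$ such that there exist symmetric $Q_v\succ0$ ($v\in V'$) with $\gamma^2Q_v-A_\sigma^\top Q_wA_\sigma\succeq0$ for all $(v,w,\sigma)\in E'$. *)

theory Defs
  imports "HOL-Analysis.Analysis"
begin

type_synonym ('v,'l) edge = "'v \<times> 'v \<times> 'l"

definition src :: "('v,'l) edge \<Rightarrow> 'v" where "src e = fst e"
definition tgt :: "('v,'l) edge \<Rightarrow> 'v" where "tgt e = fst (snd e)"
definition lbl :: "('v,'l) edge \<Rightarrow> 'l" where "lbl e = snd (snd e)"

definition is_path :: "('v,'l) edge set \<Rightarrow> ('v,'l) edge list \<Rightarrow> bool" where
  "is_path E p \<longleftrightarrow> set p \<subseteq> E \<and>
     (\<forall>i. Suc i < length p \<longrightarrow> tgt (p ! i) = src (p ! Suc i))"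

definition paths :: "('v,'l) edge set \<Rightarrow> nat \<Rightarrow> ('v,'l) edge list set" where
  "paths E T = {p. is_path E p \<and> length p = T}"

definition strongly_connected :: "'v set \<Rightarrow> ('v,'l) edge set \<Rightarrow> bool" where
  "strongly_connected V E \<longleftrightarrow> (\<forall>v\<in>V. \<forall>w\<in>V. v = w \<or>
     (\<exists>p. is_path E p \<and> p \<noteq> [] \<and> src (hd p) = v \<and> tgt (last p) = w))"

definition automaton :: "'v set \<Rightarrow> ('v,'l) edge set \<Rightarrow> bool" where
  "automaton V E \<longleftrightarrow> finite V \<and> finite E \<and> (\<forall>e\<in>E. src e \<in> V \<and> tgt e \<in> V)
     \<and> strongly_connected V E"

definition sym_mat :: "real^'n^'n \<Rightarrow> bool" where
  "sym_mat Q \<longleftrightarrow> transpose Q = Q"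

definition pos_def :: "real^'n^'n \<Rightarrow> bool" where
  "pos_def Q \<longleftrightarrow> sym_mat Q \<and> (\<forall>x. x \<noteq> 0 \<longrightarrow> x \<bullet> (Q *v x) > 0)"

definition psd :: "real^'n^'n \<Rightarrow> bool" where
  "psd M \<longleftrightarrow> (\<forall>x. x \<bullet> (M *v x) \<ge> 0)"

definition gamma_star :: "'v set \<Rightarrow> ('v,'l) edge set \<Rightarrow> ('l \<Rightarrow> real^'n^'n) \<Rightarrow> real" where
  "gamma_star V E A = Inf {\<gamma>. \<gamma> \<ge> 0 \<and> (\<exists>Q :: 'v \<Rightarrow> real^'n^'n.
      (\<forall>v\<in>V. pos_def (Q v)) \<and>
      (\<forall>(v,w,s)\<in>E. psd ((\<gamma>^2) *\<^sub>R Q v - transpose (A s) ** Q w ** A s)))}"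

fun prod_mat :: "('l \<Rightarrow> real^'n^'n) \<Rightarrow> 'l list \<Rightarrow> real^'n^'n" where
  "prod_mat A [] = mat 1"
| "prod_mat A (s # ss) = prod_mat A ss ** A s"

definition product_lift_edges :: "('v,'l) edge set \<Rightarrow> nat \<Rightarrow> ('v, 'l list) edge set" where
  "product_lift_edges E T = {(src (hd p), tgt (last p), map lbl p) | p. p \<in> paths E T}"

definition gamma_product_lift :: "'v set \<Rightarrow> ('v,'l) edge set \<Rightarrow> ('l \<Rightarrow> real^'n^'n) \<Rightarrow> nat \<Rightarrow> real" where
  "gamma_product_lift V E A T = gamma_star V (product_lift_edges E T) (prod_mat A)"

definition path_lift_edges :: "('v,'l) edge set \<Rightarrow> nat \<Rightarrow> (('v,'l) edge list, 'l) edge set" where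
  "path_lift_edges E M = {(take M p, drop 1 p, lbl (last p)) | p. p \<in> paths E (Suc M)}"

definition gamma_path_lift :: "'v set \<Rightarrow> ('v,'l) edge set \<Rightarrow> ('l \<Rightarrow> real^'n^'n) \<Rightarrow> nat \<Rightarrow> real" where
  "gamma_path_lift V E A M =
     (if M = 0 then gamma_star V E A else gamma_star (paths E M) (path_lift_edges E M) A)"

end

theory Submission
  imports Defs
begin

text \<open>Passing to inverses \<open>P\<^sub>v = Q\<^sub>v\<inverse>\<close> turns a certificate
  \<open>\<gamma>\<^sup>2 Q\<^sub>v \<succeq> B\<^sup>T Q\<^sub>w B\<close> into \<open>B P\<^sub>v B\<^sup>T \<preceq> \<gamma>\<^sup>2 P\<^sub>w\<close>.
  Let \<open>c = \<gamma>\<^bsup>-2/T\<^esup>\<close>. To a path \<open>p\<close> of length \<open>M = T - 1\<close> with nodes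
  \<open>v\<^sub>0, \<dots>, v\<^sub>M\<close> attach \<open>P'(p) = \<Sum>\<^sub>k c\<^bsup>M-k\<^esup> S\<^sub>k P(v\<^sub>k) S\<^sub>k\<^sup>T\<close>, where \<open>S\<^sub>k\<close>
  is the product of the labels of \<open>p\<close> after \<open>v\<^sub>k\<close>. For a path \<open>q\<close> of length \<open>T\<close>
  ending with label \<open>\<sigma>\<close>, the terms of \<open>A\<^sub>\<sigma> P'(q\<^sup>-) A\<^sub>\<sigma>\<^sup>T\<close> are, up to the factor
  \<open>\<gamma>\<^bsup>2/T\<^esup>\<close>, those of \<open>P'(q\<^sup>+)\<close> shifted by one node; the single unmatched term is
  the one from the first node of \<open>q\<close>, and the product-lift inequality along \<open>q\<close> bounds it
  by the missing term at the last node. Hence \<open>A\<^sub>\<sigma> P'(q\<^sup>-) A\<^sub>\<sigma>\<^sup>T \<preceq> \<gamma>\<^bsup>2/T\<^esup> P'(q\<^sup>+)\<close>,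
  and inverting \<open>P'\<close> yields a certificate for the path-dependent lift at rate \<open>\<gamma>\<^bsup>1/T\<^esup>\<close>.\<close>

subsection \<open>Quadratic forms\<close>

lemma inner_matrix_vector_transpose: "x \<bullet> (A *v y) = (transpose A *v x) \<bullet> (y::real^'n)"
  by (simp add: dot_lmul_matrix[symmetric])

lemma sym_mat_inner_commute: "sym_mat R \<Longrightarrow> x \<bullet> (R *v y) = y \<bullet> (R *v (x::real^'n))"
  unfolding sym_mat_def by (metis inner_matrix_vector_transpose inner_commute)

lemma quad_form_sandwich:
  fixes S P :: "real^'n^'n"
  shows "y \<bullet> ((S ** P ** transpose S) *v y) = (transpose S *v y) \<bullet> (P *v (transpose S *v y))"
  by (metis inner_matrix_vector_transpose matrix_vector_mul_assoc transpose_transpose)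

lemma psd_scaled_diff_iff:
  fixes X Y :: "real^'n^'n"
  shows "psd (k *\<^sub>R X - Y) \<longleftrightarrow> (\<forall>y. y \<bullet> (Y *v y) \<le> k * (y \<bullet> (X *v y)))"
  unfolding psd_def
  by (simp add: matrix_vector_mult_diff_rdistrib scaleR_matrix_vector_assoc[symmetric] inner_diff_right)

lemma pos_def_quad_nonneg: "pos_def R \<Longrightarrow> 0 \<le> x \<bullet> (R *v x)"
  unfolding pos_def_def by (cases "x = 0") (auto intro: less_imp_le)

lemma pos_def_mat_1: "pos_def (mat 1 :: real^'n^'n)"
  unfolding pos_def_def sym_mat_def by (simp add: transpose_mat)

lemma pos_def_matrix_inv:
  fixes R :: "real^'n^'n"
  assumes "pos_def R"
  shows "R ** matrix_inv R = mat 1" and "matrix_inv R ** R = mat 1"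
proof -
  have "\<forall>x. R *v x = 0 \<longrightarrow> x = 0"
    using assms unfolding pos_def_def by (metis inner_zero_right less_irrefl)
  then obtain B where "B ** R = mat 1" using matrix_left_invertible_ker by blast
  then have "invertible R" using invertible_left_inverse by blast
  then obtain B' where "R ** B' = mat 1 \<and> B' ** R = mat 1" unfolding invertible_def by blast
  then have "R ** matrix_inv R = mat 1 \<and> matrix_inv R ** R = mat 1"
    unfolding matrix_inv_def by (rule someI)
  then show "R ** matrix_inv R = mat 1" and "matrix_inv R ** R = mat 1" by auto
qed

lemma pos_def_matrix_inv_pos_def:
  fixes R :: "real^'n^'n"
  assumes "pos_def R"
  shows "pos_def (matrix_inv R)"
proof -
  let ?Ri = "matrix_inv R"
  note inv = pos_def_matrix_inv[OF assms]
  have sR: "transpose R = R" using assms unfolding pos_def_def sym_mat_def by auto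
  have "transpose ?Ri ** R = mat 1"
    by (metis inv(1) matrix_transpose_mul sR transpose_mat)
  then have "transpose ?Ri = ?Ri"
    by (metis inv(1) matrix_mul_assoc matrix_mul_lid matrix_mul_rid)
  moreover have "y \<bullet> (?Ri *v y) > 0" if "y \<noteq> 0" for y
  proof -
    let ?z = "?Ri *v y"
    have Rz: "R *v ?z = y" by (simp add: matrix_vector_mul_assoc inv)
    then have "?z \<noteq> 0" using that by auto
    then have "?z \<bullet> (R *v ?z) > 0" using assms unfolding pos_def_def by auto
    then show ?thesis using Rz by (simp add: inner_commute)
  qed
  ultimately show ?thesis unfolding pos_def_def sym_mat_def by auto
qed

lemma psd_form_Cauchy_Schwarz:
  fixes R :: "real^'n^'n"
  assumes s: "sym_mat R" and p: "\<And>x. 0 \<le> x \<bullet> (R *v x)"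
  shows "(a \<bullet> (R *v b))^2 \<le> (a \<bullet> (R *v a)) * (b \<bullet> (R *v b))"
proof -
  let ?p = "a \<bullet> (R *v a)" and ?q = "a \<bullet> (R *v b)" and ?r = "b \<bullet> (R *v b)"
  have quad: "0 \<le> ?p + 2*t*?q + t^2 * ?r" for t
  proof -
    have "0 \<le> (a + t *\<^sub>R b) \<bullet> (R *v (a + t *\<^sub>R b))" by (rule p)
    also have "\<dots> = ?p + t * (b \<bullet> (R *v a)) + t * ?q + t^2 * ?r"
      by (simp add: matrix_vector_right_distrib matrix_scaleR_vector_ac[symmetric]
           scaleR_matrix_vector_assoc[symmetric] inner_add_left inner_add_right
           power2_eq_square algebra_simps)
    also have "b \<bullet> (R *v a) = ?q" using sym_mat_inner_commute[OF s] by metis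
    finally show ?thesis by simp
  qed
  show ?thesis
  proof (cases "?r = 0")
    case True
    have "?q = 0"
    proof (rule ccontr)
      assume "?q \<noteq> 0"
      have "0 \<le> ?p + 2*(-(?p+1)/(2*?q))*?q + (-(?p+1)/(2*?q))^2 * ?r" by (rule quad)
      then show False using True \<open>?q \<noteq> 0\<close> by (simp add: field_simps)
    qed
    then show ?thesis using True by simp
  next
    case False
    have r0: "?r > 0" using p[of b] False by linarith
    have "0 \<le> ?p + 2*(-?q/?r)*?q + (-?q/?r)^2 * ?r" by (rule quad)
    then have "0 \<le> ?p*?r - ?q^2" using r0 by (simp add: field_simps power2_eq_square)
    then show ?thesis by (simp add: algebra_simps)
  qed
qed

text \<open>In matrix form: \<open>B\<^sup>T R B \<preceq> c Q\<close> implies \<open>B Q\<inverse> B\<^sup>T \<preceq> c R\<inverse>\<close>,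
  by Cauchy-Schwarz for the form of \<open>R\<close> applied to \<open>R\<inverse>y\<close> and \<open>B Q\<inverse> B\<^sup>T y\<close>.\<close>

lemma quad_form_dual_le:
  fixes Q R B :: "real^'n^'n"
  assumes pQ: "pos_def Q" and pR: "pos_def R" and c: "c \<ge> 0"
    and H: "\<And>z. (B *v z) \<bullet> (R *v (B *v z)) \<le> c * (z \<bullet> (Q *v z))"
  shows "y \<bullet> ((B ** matrix_inv Q ** transpose B) *v y) \<le> c * (y \<bullet> (matrix_inv R *v y))"
proof -
  let ?Ri = "matrix_inv R"
  define z where "z = matrix_inv Q *v (transpose B *v y)"
  define a where "a = ?Ri *v y"
  define s where "s = y \<bullet> ((B ** matrix_inv Q ** transpose B) *v y)"
  have s_Bz: "s = y \<bullet> (B *v z)" unfolding s_def z_def by (metis matrix_vector_mul_assoc)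
  have "Q *v z = transpose B *v y"
    unfolding z_def by (simp add: matrix_vector_mul_assoc pos_def_matrix_inv[OF pQ])
  then have s_Q: "s = z \<bullet> (Q *v z)"
    using s_Bz by (simp add: inner_matrix_vector_transpose inner_commute)
  have Ra: "R *v a = y" unfolding a_def by (simp add: matrix_vector_mul_assoc pos_def_matrix_inv[OF pR])
  have sR: "sym_mat R" using pR unfolding pos_def_def by auto
  have s_a: "s = a \<bullet> (R *v (B *v z))"
    using sym_mat_inner_commute[OF sR, of a "B *v z"] Ra s_Bz by (simp add: inner_commute)
  have a_a: "a \<bullet> (R *v a) = y \<bullet> (?Ri *v y)" using Ra a_def by (simp add: inner_commute)
  have s0: "s \<ge> 0" using s_Q pos_def_quad_nonneg[OF pQ] by simp
  have yRy: "y \<bullet> (?Ri *v y) \<ge> 0" by (rule pos_def_quad_nonneg[OF pos_def_matrix_inv_pos_def[OF pR]])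
  have "s^2 \<le> (y \<bullet> (?Ri *v y)) * ((B *v z) \<bullet> (R *v (B *v z)))"
    using psd_form_Cauchy_Schwarz[OF sR pos_def_quad_nonneg[OF pR], of a "B *v z"] s_a a_a by simp
  also have "\<dots> \<le> (y \<bullet> (?Ri *v y)) * (c * s)"
    using H[of z] s_Q yRy by (simp add: mult_left_mono)
  finally have "s * s \<le> (c * (y \<bullet> (?Ri *v y))) * s" by (simp add: power2_eq_square algebra_simps)
  then have "s \<le> c * (y \<bullet> (?Ri *v y))"
    using s0 yRy c by (metis mult_right_le_imp_le mult_nonneg_nonneg order_le_less)
  then show ?thesis unfolding s_def .
qed

lemma transpose_sum: "transpose (sum M K) = (\<Sum>k\<in>K. transpose (M k))"
  for M :: "'a \<Rightarrow> real^'n^'n"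
proof (induct K rule: infinite_finite_induct)
  case (insert x F)
  have "transpose (X + Y) = transpose X + transpose Y" for X Y :: "real^'n^'n"
    by (simp add: transpose_def vec_eq_iff)
  with insert show ?case by simp
qed (simp_all add: transpose_def vec_eq_iff)

lemma sum_matrix_vector_mult: "sum M K *v y = (\<Sum>k\<in>K. M k *v y)"
  for M :: "'a \<Rightarrow> real^'n^'n"
  by (induct K rule: infinite_finite_induct) (auto simp: matrix_vector_mult_add_rdistrib)

subsection \<open>Feasible rates\<close>

definition feasible_rates :: "'v set \<Rightarrow> ('v,'l) edge set \<Rightarrow> ('l \<Rightarrow> real^'n^'n) \<Rightarrow> real set" where
  "feasible_rates V E A = {\<gamma>. \<gamma> \<ge> 0 \<and> (\<exists>Q :: 'v \<Rightarrow> real^'n^'n.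
      (\<forall>v\<in>V. pos_def (Q v)) \<and>
      (\<forall>(v,w,s)\<in>E. psd ((\<gamma>^2) *\<^sub>R Q v - transpose (A s) ** Q w ** A s)))}"

lemma gamma_star_eq_Inf_feasible_rates: "gamma_star V E A = Inf (feasible_rates V E A)"
  unfolding gamma_star_def feasible_rates_def ..

lemma feasible_rates_nonneg: "\<gamma> \<in> feasible_rates V E A \<Longrightarrow> \<gamma> \<ge> 0"
  unfolding feasible_rates_def by auto

text \<open>Identity certificates with \<open>\<gamma>\<close> bounding all operator norms.\<close>

lemma feasible_rates_nonempty:
  fixes A :: "'l \<Rightarrow> real^'n^'n"
  assumes "finite E"
  shows "feasible_rates V E A \<noteq> {}"
proof -
  define K where "K = 1 + (\<Sum>e\<in>E. onorm ((*v) (A (lbl e))))"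
  have onorm_nonneg: "0 \<le> onorm ((*v) (A s))" for s by (rule onorm_pos_le) simp
  have K0: "K \<ge> 0" unfolding K_def by (simp add: onorm_nonneg sum_nonneg)
  have "y \<bullet> ((transpose (A s) ** mat 1 ** A s) *v y) \<le> K^2 * (y \<bullet> (mat 1 *v y))"
    if "(v,w,s) \<in> E" for v w s y
  proof -
    have "onorm ((*v) (A s)) \<le> K"
      using member_le_sum[OF that, of "\<lambda>e. onorm ((*v) (A (lbl e)))"] onorm_nonneg assms
      unfolding K_def lbl_def by simp
    then have "norm (A s *v y) \<le> K * norm y"
      by (meson onorm[of "(*v) (A s)"] matrix_vector_mul_bounded_linear mult_right_mono
          norm_ge_zero order_trans)
    then have "(norm (A s *v y))^2 \<le> (K * norm y)^2" by (simp add: power_mono)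
    then show ?thesis
      using quad_form_sandwich[of y "transpose (A s)" "mat 1"]
      by (simp add: dot_square_norm power_mult_distrib)
  qed
  then have "K \<in> feasible_rates V E A"
    unfolding feasible_rates_def psd_scaled_diff_iff
    using K0 pos_def_mat_1 by fastforce
  then show ?thesis by blast
qed

lemma feasible_rates_upward_closed:
  assumes "\<And>v w s. (v,w,s) \<in> E \<Longrightarrow> v \<in> V" "\<gamma> \<in> feasible_rates V E A" "\<gamma> \<le> \<gamma>'"
  shows "\<gamma>' \<in> feasible_rates V E A"
proof -
  obtain Q where Q: "\<forall>v\<in>V. pos_def (Q v)"
    "\<forall>(v,w,s)\<in>E. \<forall>y. y \<bullet> ((transpose (A s) ** Q w ** A s) *v y) \<le> \<gamma>^2 * (y \<bullet> (Q v *v y))"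
    and g0: "\<gamma> \<ge> 0"
    using assms(2) unfolding feasible_rates_def psd_scaled_diff_iff by auto
  have "\<gamma>^2 \<le> \<gamma>'^2" using g0 assms(3) by (simp add: power_mono)
  then have "\<gamma>^2 * (y \<bullet> (Q v *v y)) \<le> \<gamma>'^2 * (y \<bullet> (Q v *v y))" if "v \<in> V" for v y
    using pos_def_quad_nonneg[of "Q v" y] Q(1) that by (simp add: mult_right_mono)
  then have "\<forall>(v,w,s)\<in>E. \<forall>y. y \<bullet> ((transpose (A s) ** Q w ** A s) *v y) \<le> \<gamma>'^2 * (y \<bullet> (Q v *v y))"
    using Q(2) assms(1) by (fastforce intro: order_trans)
  then show ?thesis
    unfolding feasible_rates_def psd_scaled_diff_iff using Q(1) g0 assms(3) by auto
qed

lemma Inf_le_Inf_powr: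
  fixes X Y :: "real set"
  assumes "Y \<noteq> {}" and up: "\<And>y z. y \<in> Y \<Longrightarrow> y \<le> z \<Longrightarrow> z \<in> Y"
    and Y0: "\<And>y. y \<in> Y \<Longrightarrow> 0 \<le> y" and X0: "\<And>x. x \<in> X \<Longrightarrow> 0 \<le> x"
    and root: "\<And>y. y \<in> Y \<Longrightarrow> 0 < y \<Longrightarrow> y powr (1 / real n) \<in> X"
    and n: "n \<ge> 1"
  shows "Inf X \<le> Inf Y powr (1 / real n)"
proof -
  have bY: "bdd_below Y" using Y0 by (rule bdd_belowI)
  have bX: "bdd_below X" using X0 by (rule bdd_belowI)
  have I0: "Inf Y \<ge> 0" using assms(1) Y0 by (rule cInf_greatest)
  have above_Inf: "\<gamma> \<in> Y" if "Inf Y < \<gamma>" for \<gamma>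
    using that up cInf_less_iff[OF assms(1) bY] by (meson less_imp_le)
  have "X \<noteq> {}" using root[OF above_Inf, of "Inf Y + 1"] I0 by auto
  then have X_0: "Inf X \<ge> 0" using X0 by (rule cInf_greatest)
  have "Inf X powr real n \<le> Inf Y"
  proof (rule dense_ge)
    fix \<gamma> assume "Inf Y < \<gamma>"
    then have "Inf X \<le> \<gamma> powr (1 / real n)"
      using root[OF above_Inf] I0 by (intro cInf_lower bX) auto
    then have "Inf X powr real n \<le> (\<gamma> powr (1 / real n)) powr real n"
      using X_0 by (simp add: powr_mono2)
    also have "\<dots> = \<gamma>" using \<open>Inf Y < \<gamma>\<close> I0 n by (simp add: powr_powr)
    finally show "Inf X powr real n \<le> \<gamma>" .
  qed
  then have "(Inf X powr real n) powr (1 / real n) \<le> Inf Y powr (1 / real n)"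
    using X_0 by (simp add: powr_mono2)
  then show ?thesis using X_0 n by (simp add: powr_powr)
qed

subsection \<open>Paths and lifts\<close>

lemma paths_length: "q \<in> paths E n \<Longrightarrow> length q = n"
  unfolding paths_def by auto

lemma finite_paths: "finite E \<Longrightarrow> finite (paths E n)"
  unfolding paths_def is_path_def
  by (rule finite_subset[OF _ finite_lists_length_eq[of E n]]) auto

lemma take_in_paths: "q \<in> paths E (Suc M) \<Longrightarrow> take M q \<in> paths E M"
  unfolding paths_def is_path_def by (auto dest: in_set_takeD)

lemma drop_one_in_paths: "q \<in> paths E (Suc M) \<Longrightarrow> drop 1 q \<in> paths E M"
  unfolding paths_def is_path_def by (auto dest: in_set_dropD)

lemma finite_product_lift_edges: "finite E \<Longrightarrow> finite (product_lift_edges E T)"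
proof -
  have "product_lift_edges E T = (\<lambda>p. (src (hd p), tgt (last p), map lbl p)) ` paths E T"
    unfolding product_lift_edges_def by blast
  then show "finite E \<Longrightarrow> ?thesis" using finite_paths[of E T] by simp
qed

lemma product_lift_edges_src:
  assumes "\<forall>e\<in>E. src e \<in> V \<and> tgt e \<in> V" "T \<ge> 1" "(v,w,s) \<in> product_lift_edges E T"
  shows "v \<in> V"
proof -
  obtain p where p: "p \<in> paths E T" "v = src (hd p)"
    using assms(3) unfolding product_lift_edges_def by blast
  have "p \<noteq> []" "set p \<subseteq> E" using p(1) assms(2) unfolding paths_def is_path_def by auto
  then show ?thesis using p(2) assms(1) hd_in_set by blast
qed

lemma feasible_rates_product_lift_one:
  "feasible_rates V (product_lift_edges E 1) (prod_mat A) = feasible_rates V E A"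
proof -
  have "paths E 1 = (\<lambda>e. [e]) ` E"
    unfolding paths_def is_path_def by (auto simp: length_Suc_conv)
  then have "product_lift_edges E 1 = (\<lambda>p. (src (hd p), tgt (last p), map lbl p)) ` (\<lambda>e. [e]) ` E"
    unfolding product_lift_edges_def by blast
  then have "product_lift_edges E 1 = (\<lambda>e. (src e, tgt e, [lbl e])) ` E"
    by (simp add: image_image)
  then show ?thesis
    unfolding feasible_rates_def by (simp add: src_def tgt_def lbl_def case_prod_unfold)
qed

definition node_at :: "('v,'l) edge list \<Rightarrow> nat \<Rightarrow> 'v" where
  "node_at p k = (if k < length p then src (p ! k) else tgt (last p))"

lemma node_at_in_V:
  assumes "\<forall>e\<in>E. src e \<in> V \<and> tgt e \<in> V" "p \<in> paths E n" "n \<ge> 1" "k \<le> n"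
  shows "node_at p k \<in> V"
proof -
  have l: "length p = n" and s: "set p \<subseteq> E" using assms(2) unfolding paths_def is_path_def by auto
  then have "p \<noteq> []" using assms(3) by auto
  then have "last p \<in> E" using s last_in_set by blast
  moreover have "p ! k \<in> E" if "k < n" using s l that nth_mem by blast
  ultimately show ?thesis using assms(1) l unfolding node_at_def by auto
qed

lemma node_at_take:
  assumes "q \<in> paths E (Suc M)" "M \<ge> 1" "k \<le> M"
  shows "node_at (take M q) k = node_at q k"
proof (cases "k < M")
  case False
  have l: "length q = Suc M" using assms(1) by (rule paths_length)
  have "tgt (q ! (M - 1)) = src (q ! Suc (M - 1))"
    using assms(1,2) l unfolding paths_def is_path_def by simp
  moreover have "last (take M q) = q ! (M - 1)"
    using l assms(2) by (subst last_conv_nth) auto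
  ultimately show ?thesis using l False assms(2,3) unfolding node_at_def by simp
qed (use assms paths_length in \<open>auto simp: node_at_def\<close>)

lemma node_at_drop_one:
  assumes "length q = Suc M" "M \<ge> 1" "k \<le> M"
  shows "node_at (drop 1 q) k = node_at q (Suc k)"
  using assms last_drop[of 1 q] unfolding node_at_def by auto

definition suffix_mat :: "('l \<Rightarrow> real^'n^'n) \<Rightarrow> ('v,'l) edge list \<Rightarrow> nat \<Rightarrow> real^'n^'n" where
  "suffix_mat A p k = prod_mat A (map lbl (drop k p))"

lemma prod_mat_append: "prod_mat A (xs @ ys) = prod_mat A ys ** prod_mat A xs"
  by (induct xs) (auto simp: matrix_mul_assoc)

lemma suffix_mat_take:
  assumes "length q = Suc M" "k \<le> M"
  shows "suffix_mat A q k = A (lbl (last q)) ** suffix_mat A (take M q) k"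
proof -
  have "q = take M q @ [last q]"
    using assms(1) append_butlast_last_id[of q] butlast_conv_take[of q] by force
  then have "drop k q = drop k (take M q @ [last q])" by simp
  also have "\<dots> = drop k (take M q) @ [last q]" using assms by simp
  finally show ?thesis unfolding suffix_mat_def by (simp add: prod_mat_append)
qed

lemma suffix_mat_drop_one: "suffix_mat A (drop 1 q) k = suffix_mat A q (Suc k)"
  unfolding suffix_mat_def by simp

definition suffix_form ::
    "('l \<Rightarrow> real^'n^'n) \<Rightarrow> ('v \<Rightarrow> real^'n^'n) \<Rightarrow> ('v,'l) edge list \<Rightarrow> nat \<Rightarrow> real^'n \<Rightarrow> real" where
  "suffix_form A P p k y =
     (transpose (suffix_mat A p k) *v y) \<bullet> (P (node_at p k) *v (transpose (suffix_mat A p k) *v y))"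

lemma suffix_form_take:
  assumes "q \<in> paths E (Suc M)" "M \<ge> 1" "k \<le> M"
  shows "suffix_form A P (take M q) k (transpose (A (lbl (last q))) *v y) = suffix_form A P q k y"
  using assms unfolding suffix_form_def
  by (simp add: node_at_take suffix_mat_take[OF paths_length[OF assms(1)]]
      matrix_transpose_mul matrix_vector_mul_assoc del: transpose_matrix_vector)

lemma suffix_form_drop_one:
  assumes "length q = Suc M" "M \<ge> 1" "k \<le> M"
  shows "suffix_form A P (drop 1 q) k y = suffix_form A P q (Suc k) y"
  unfolding suffix_form_def node_at_drop_one[OF assms] suffix_mat_drop_one ..

lemma suffix_form_nonneg: "pos_def (P (node_at p k)) \<Longrightarrow> 0 \<le> suffix_form A P p k y"
  unfolding suffix_form_def by (rule pos_def_quad_nonneg)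

subsection \<open>The dual certificate on the path-dependent lift\<close>

definition path_dual_lyap ::
    "('l \<Rightarrow> real^'n^'n) \<Rightarrow> ('v \<Rightarrow> real^'n^'n) \<Rightarrow> real \<Rightarrow> ('v,'l) edge list \<Rightarrow> real^'n^'n" where
  "path_dual_lyap A P c p = (\<Sum>k\<le>length p. c^(length p - k) *\<^sub>R
     (suffix_mat A p k ** P (node_at p k) ** transpose (suffix_mat A p k)))"

lemma quad_form_path_dual_lyap:
  "y \<bullet> (path_dual_lyap A P c p *v y) = (\<Sum>k\<le>length p. c^(length p - k) * suffix_form A P p k y)"
  unfolding path_dual_lyap_def suffix_form_def
  by (simp add: sum_matrix_vector_mult inner_sum_right scaleR_matrix_vector_assoc[symmetric]
      quad_form_sandwich del: transpose_matrix_vector)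

lemma pos_def_path_dual_lyap:
  assumes pd: "\<And>k. k \<le> length p \<Longrightarrow> pos_def (P (node_at p k))" and "c > 0"
  shows "pos_def (path_dual_lyap A P c p)"
proof -
  have "sym_mat (path_dual_lyap A P c p)"
    using pd unfolding sym_mat_def path_dual_lyap_def transpose_sum transpose_scalar pos_def_def
    by (intro sum.cong refl) (simp add: matrix_transpose_mul matrix_mul_assoc)
  moreover have "y \<bullet> (path_dual_lyap A P c p *v y) > 0" if "y \<noteq> 0" for y
  proof -
    have "0 \<le> suffix_form A P p k y" if "k \<le> length p" for k
      using pd[OF that] by (rule suffix_form_nonneg)
    moreover have "suffix_form A P p (length p) y > 0"
      using pd[of "length p"] \<open>y \<noteq> 0\<close> unfolding suffix_form_def suffix_mat_def pos_def_def by simp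
    ultimately show ?thesis
      unfolding quad_form_path_dual_lyap using \<open>c > 0\<close>
      by (intro sum_pos2[of _ "length p"]) auto
  qed
  ultimately show ?thesis unfolding pos_def_def by auto
qed

text \<open>The shift underlying the step inequality: with \<open>c g'\<^sup>2 = 1\<close>, each term \<open>k \<ge> 1\<close> on the
  left is the term \<open>k - 1\<close> on the right, and the term \<open>k = 0\<close> is bounded by the last one.\<close>

lemma weighted_sum_shift_le:
  fixes g :: "nat \<Rightarrow> real"
  assumes "g' > 0" and c: "c = inverse (g'^2)"
    and nonneg: "\<And>k. k \<le> Suc M \<Longrightarrow> 0 \<le> g k"
    and first_last: "g 0 \<le> g'^(2 * Suc M) * g (Suc M)"
  shows "(\<Sum>k\<le>M. c^(M-k) * g k) \<le> g'^2 * (\<Sum>k\<le>M. c^(M-k) * g (Suc k))"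
proof -
  have cg: "g'^2 * c = 1" using \<open>g' > 0\<close> c by simp
  have "c^M * g 0 \<le> c^M * (g'^(2 * Suc M) * g (Suc M))"
    using first_last \<open>g' > 0\<close> c by (simp add: mult_left_mono)
  also have "\<dots> = (g'^2 * c)^M * g'^2 * g (Suc M)"
  proof -
    have "g'^(2 * Suc M) = (g'^2)^M * g'^2" by (simp add: power_mult[symmetric] power_add[symmetric])
    then show ?thesis by (simp add: power_mult_distrib algebra_simps)
  qed
  finally have first: "c^M * g 0 \<le> g'^2 * g (Suc M)" using cg by simp
  show ?thesis
  proof (cases M)
    case 0
    then show ?thesis using first by simp
  next
    case (Suc M')
    have "(\<Sum>k\<le>M'. g'^2 * c^(M-k) * g (Suc k)) = (\<Sum>k\<le>M'. c^(M'-k) * g (Suc k))"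
    proof (rule sum.cong[OF refl])
      fix k assume "k \<in> {..M'}"
      then have "M - k = Suc (M' - k)" using Suc by auto
      then show "g'^2 * c^(M-k) * g (Suc k) = c^(M'-k) * g (Suc k)"
        using cg by (simp add: mult.assoc[symmetric])
    qed
    moreover have "(\<Sum>k\<le>M. c^(M-k) * g k) = c^M * g 0 + (\<Sum>k\<le>M'. c^(M'-k) * g (Suc k))"
      unfolding Suc sum.atMost_Suc_shift by simp
    moreover have "g'^2 * (\<Sum>k\<le>M. c^(M-k) * g (Suc k))
        = (\<Sum>k\<le>M'. g'^2 * c^(M-k) * g (Suc k)) + g'^2 * g (Suc M)"
      unfolding Suc sum.atMost_Suc by (simp add: sum_distrib_left algebra_simps)
    ultimately show ?thesis using first by simp
  qed
qed

lemma product_lift_dual_bound: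
  assumes VE: "\<forall>e\<in>E. src e \<in> V \<and> tgt e \<in> V" and "T \<ge> 1"
    and Qpd: "\<forall>v\<in>V. pos_def (Q v)"
    and Qcert: "\<forall>(v,w,s)\<in>product_lift_edges E T.
               psd ((\<gamma>^2) *\<^sub>R Q v - transpose (prod_mat A s) ** Q w ** prod_mat A s)"
    and q: "q \<in> paths E T"
  shows "suffix_form A (\<lambda>v. matrix_inv (Q v)) q 0 z
         \<le> \<gamma>^2 * suffix_form A (\<lambda>v. matrix_inv (Q v)) q T z"
proof -
  define B where "B = prod_mat A (map lbl q)"
  have len: "length q = T" using q by (rule paths_length)
  then have "q \<noteq> []" using \<open>T \<ge> 1\<close> by auto
  then have nodes: "node_at q 0 = src (hd q)" "node_at q T = tgt (last q)"
    using len unfolding node_at_def by (auto simp: hd_conv_nth)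
  have "(node_at q 0, node_at q T, map lbl q) \<in> product_lift_edges E T"
    unfolding product_lift_edges_def nodes using q by blast
  then have "x \<bullet> ((transpose B ** Q (node_at q T) ** B) *v x) \<le> \<gamma>^2 * (x \<bullet> (Q (node_at q 0) *v x))"
    for x using Qcert unfolding B_def psd_scaled_diff_iff by auto
  then have "(B *v x) \<bullet> (Q (node_at q T) *v (B *v x)) \<le> \<gamma>^2 * (x \<bullet> (Q (node_at q 0) *v x))" for x
    by (metis quad_form_sandwich transpose_transpose)
  then have "z \<bullet> ((B ** matrix_inv (Q (node_at q 0)) ** transpose B) *v z)
      \<le> \<gamma>^2 * (z \<bullet> (matrix_inv (Q (node_at q T)) *v z))"
    using Qpd node_at_in_V[OF VE q \<open>T \<ge> 1\<close>] by (intro quad_form_dual_le) auto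
  then show ?thesis
    unfolding suffix_form_def suffix_mat_def B_def quad_form_sandwich[symmetric] using len by simp
qed

lemma path_dual_lyap_step:
  fixes A :: "'l \<Rightarrow> real^'n^'n"
  assumes q: "q \<in> paths E (Suc M)" and "M \<ge> 1" and "g' > 0"
    and nonneg: "\<And>k. k \<le> Suc M \<Longrightarrow> 0 \<le> suffix_form A P q k z"
    and first_last: "suffix_form A P q 0 z \<le> g'^(2 * Suc M) * suffix_form A P q (Suc M) z"
  defines "c \<equiv> inverse (g'^2)" and "B \<equiv> transpose (A (lbl (last q)))"
  shows "(B *v z) \<bullet> (path_dual_lyap A P c (take M q) *v (B *v z))
         \<le> g'^2 * (z \<bullet> (path_dual_lyap A P c (drop 1 q) *v z))"
proof -
  have len: "length q = Suc M" using q by (rule paths_length)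
  have "(B *v z) \<bullet> (path_dual_lyap A P c (take M q) *v (B *v z))
      = (\<Sum>k\<le>M. c^(M-k) * suffix_form A P q k z)"
    unfolding quad_form_path_dual_lyap B_def length_take using len
    by (intro sum.cong refl) (simp_all add: suffix_form_take[OF q \<open>M \<ge> 1\<close>] del: transpose_matrix_vector)
  also have "\<dots> \<le> g'^2 * (\<Sum>k\<le>M. c^(M-k) * suffix_form A P q (Suc k) z)"
    by (rule weighted_sum_shift_le[OF \<open>g' > 0\<close> c_def[THEN meta_eq_to_obj_eq] nonneg first_last])
  also have "(\<Sum>k\<le>M. c^(M-k) * suffix_form A P q (Suc k) z)
      = z \<bullet> (path_dual_lyap A P c (drop 1 q) *v z)"
    unfolding quad_form_path_dual_lyap using len
    by (intro sum.cong refl) (simp_all add: suffix_form_drop_one[OF len \<open>M \<ge> 1\<close>, simplified])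
  finally show ?thesis .
qed

lemma path_lift_root_feasible:
  fixes A :: "'l \<Rightarrow> real^'n^'n"
  assumes VE: "\<forall>e\<in>E. src e \<in> V \<and> tgt e \<in> V" and "M \<ge> 1"
    and "\<gamma> \<in> feasible_rates V (product_lift_edges E (Suc M)) (prod_mat A)" and "\<gamma> > 0"
  shows "\<gamma> powr (1 / real (Suc M)) \<in> feasible_rates (paths E M) (path_lift_edges E M) A"
proof -
  obtain Q where Qpd: "\<forall>v\<in>V. pos_def (Q v)"
    and Qcert: "\<forall>(v,w,s)\<in>product_lift_edges E (Suc M).
               psd ((\<gamma>^2) *\<^sub>R Q v - transpose (prod_mat A s) ** Q w ** prod_mat A s)"
    using assms(3) unfolding feasible_rates_def by auto
  define g' where "g' = \<gamma> powr (1 / real (Suc M))"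
  define P where "P = (\<lambda>v. matrix_inv (Q v))"
  define P' where "P' = path_dual_lyap A P (inverse (g'^2))"
  have "g' > 0" unfolding g'_def using \<open>\<gamma> > 0\<close> by simp
  have "g'^(Suc M) = g' powr real (Suc M)" using \<open>g' > 0\<close> by (rule powr_realpow[symmetric])
  also have "\<dots> = \<gamma>" using \<open>\<gamma> > 0\<close> unfolding g'_def by (simp add: powr_powr)
  finally have g'_pow: "g'^(2 * Suc M) = \<gamma>^2"
    by (metis power_mult mult.commute)
  have P_node: "pos_def (P (node_at p k))" if "p \<in> paths E n" "n \<ge> 1" "k \<le> n" for p n k
    unfolding P_def using Qpd node_at_in_V[OF VE that] pos_def_matrix_inv_pos_def by blast
  have P'_pd: "pos_def (P' p)" if "p \<in> paths E M" for p
    unfolding P'_def using \<open>g' > 0\<close> P_node[OF that \<open>M \<ge> 1\<close>] paths_length[OF that]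
    by (intro pos_def_path_dual_lyap) auto
  have step: "psd ((g'^2) *\<^sub>R matrix_inv (P' (take M q))
      - transpose (A (lbl (last q))) ** matrix_inv (P' (drop 1 q)) ** A (lbl (last q)))"
    if q: "q \<in> paths E (Suc M)" for q
  proof -
    have nonneg: "0 \<le> suffix_form A P q k z" if "k \<le> Suc M" for k z
      using P_node[OF q _ that] by (simp add: suffix_form_nonneg)
    have "suffix_form A P q 0 z \<le> g'^(2 * Suc M) * suffix_form A P q (Suc M) z" for z
      using product_lift_dual_bound[OF VE _ Qpd Qcert q] g'_pow unfolding P_def by simp
    then have "(transpose (A (lbl (last q))) *v z) \<bullet>
          (P' (take M q) *v (transpose (A (lbl (last q))) *v z)) \<le> g'^2 * (z \<bullet> (P' (drop 1 q) *v z))"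
      for z unfolding P'_def
      using path_dual_lyap_step[OF q \<open>M \<ge> 1\<close> \<open>g' > 0\<close> nonneg] by simp
    then have "y \<bullet> ((transpose (A (lbl (last q))) ** matrix_inv (P' (drop 1 q))
          ** transpose (transpose (A (lbl (last q))))) *v y)
        \<le> g'^2 * (y \<bullet> (matrix_inv (P' (take M q)) *v y))" for y
      using P'_pd take_in_paths[OF q] drop_one_in_paths[OF q] by (intro quad_form_dual_le) auto
    then show ?thesis unfolding psd_scaled_diff_iff by simp
  qed
  have "\<forall>(v,w,s)\<in>path_lift_edges E M.
      psd ((g'^2) *\<^sub>R matrix_inv (P' v) - transpose (A s) ** matrix_inv (P' w) ** A s)"
    unfolding path_lift_edges_def using step by blast
  moreover have "\<forall>p\<in>paths E M. pos_def (matrix_inv (P' p))"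
    using P'_pd pos_def_matrix_inv_pos_def by blast
  ultimately show ?thesis
    unfolding feasible_rates_def g'_def[symmetric] using \<open>g' > 0\<close> by fastforce
qed

theorem theorem3p9:
  fixes V :: "'v set" and E :: "('v,'l) edge set" and A :: "'l \<Rightarrow> real^'n^'n"
    and T :: nat
  assumes "automaton V E"
    and "T \<ge> 1"
  shows "gamma_path_lift V E A (T - 1) \<le> gamma_product_lift V E A T powr (1 / real T)"
proof -
  have VE: "\<forall>e\<in>E. src e \<in> V \<and> tgt e \<in> V" and "finite E"
    using assms(1) unfolding automaton_def by auto
  let ?Y = "feasible_rates V (product_lift_edges E T) (prod_mat A)"
  have Y_ne: "?Y \<noteq> {}"
    by (rule feasible_rates_nonempty[OF finite_product_lift_edges[OF \<open>finite E\<close>]])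
  have Y_up: "z \<in> ?Y" if "y \<in> ?Y" "y \<le> z" for y z
    by (rule feasible_rates_upward_closed[OF product_lift_edges_src[OF VE assms(2)] that])
  obtain M where T: "T = Suc M" using assms(2) by (cases T) auto
  show ?thesis
  proof (cases "M = 0")
    case True
    then have T1: "T = 1" using T by simp
    have "Inf ?Y \<ge> 0" using Y_ne feasible_rates_nonneg by (rule cInf_greatest)
    then show ?thesis
      unfolding gamma_path_lift_def gamma_product_lift_def gamma_star_eq_Inf_feasible_rates
        T1 feasible_rates_product_lift_one
      by simp
  next
    case False
    then have root: "\<gamma> powr (1 / real T) \<in> feasible_rates (paths E M) (path_lift_edges E M) A"
      if "\<gamma> \<in> ?Y" "\<gamma> > 0" for \<gamma>
      using path_lift_root_feasible[OF VE _ that[unfolded T]] T by simp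
    have "Inf (feasible_rates (paths E M) (path_lift_edges E M) A) \<le> Inf ?Y powr (1 / real T)"
      by (rule Inf_le_Inf_powr[OF Y_ne Y_up feasible_rates_nonneg feasible_rates_nonneg root assms(2)])
    then show ?thesis
      using False T unfolding gamma_path_lift_def gamma_product_lift_def gamma_star_eq_Inf_feasible_rates
      by simp
  qed
qed

end
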